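(* In a system of quads, the facial walk of a quad cannot contain the same edge twice, whether with the same or with opposite orientations.
   Context: A system of quads is a combinatorial surface (graph cellularly embedded via a rotation system in an orientable surface of negative Euler characteristic) whose graph is bipartite, whose non-perforated faces (quads) are all quadrilaterals, and whose vertices all have degree at least 8. *)

theory Defs
  imports Main
begin

text \<open>Combinatorial surfaces encoded as combinatorial maps on a finite set of darts D:
  alpha is the fixed-point-free involution exchanging the two darts of an edge,
  sigma is the rotation system (successor of a dart around its origin vertex),
  phi = sigma o alpha is the face permutation (facial walks).
  Vertices, edges, faces are the orbits of sigma, alpha, phi respectively.
  Pf is the set of darts lying in perforated faces (a union of phi-orbits).\<close>

definition orb :: "('d \<Rightarrow> 'd) \<Rightarrow> 'd \<Rightarrow> 'd set" where
  "orb f d = {(f ^^ n) d | n. True}"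

definition face_perm :: "('d \<Rightarrow> 'd) \<Rightarrow> ('d \<Rightarrow> 'd) \<Rightarrow> 'd \<Rightarrow> 'd" where
  "face_perm \<alpha> \<sigma> = \<sigma> \<circ> \<alpha>"

definition comb_map :: "'d set \<Rightarrow> ('d \<Rightarrow> 'd) \<Rightarrow> ('d \<Rightarrow> 'd) \<Rightarrow> bool" where
  "comb_map D \<alpha> \<sigma> \<longleftrightarrow> finite D \<and> D \<noteq> {} \<and>
     bij_betw \<sigma> D D \<and> bij_betw \<alpha> D D \<and>
     (\<forall>d\<in>D. \<alpha> (\<alpha> d) = d \<and> \<alpha> d \<noteq> d)"

definition comb_connected :: "'d set \<Rightarrow> ('d \<Rightarrow> 'd) \<Rightarrow> ('d \<Rightarrow> 'd) \<Rightarrow> bool" where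
  "comb_connected D \<alpha> \<sigma> \<longleftrightarrow>
     (\<forall>d\<in>D. \<forall>e\<in>D. (d, e) \<in> (({(x, \<sigma> x) | x. x \<in> D} \<union> {(x, \<alpha> x) | x. x \<in> D})\<^sup>*))"

definition n_vertices :: "'d set \<Rightarrow> ('d \<Rightarrow> 'd) \<Rightarrow> nat" where
  "n_vertices D \<sigma> = card ((\<lambda>d. orb \<sigma> d) ` D)"

definition n_edges :: "'d set \<Rightarrow> ('d \<Rightarrow> 'd) \<Rightarrow> nat" where
  "n_edges D \<alpha> = card ((\<lambda>d. orb \<alpha> d) ` D)"

definition n_faces_np :: "'d set \<Rightarrow> 'd set \<Rightarrow> ('d \<Rightarrow> 'd) \<Rightarrow> ('d \<Rightarrow> 'd) \<Rightarrow> nat" where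
  "n_faces_np D Pf \<alpha> \<sigma> = card ((\<lambda>d. orb (face_perm \<alpha> \<sigma>) d) ` (D - Pf))"

text \<open>Euler characteristic of the surface (perforated faces are removed, i.e. are holes).\<close>
definition euler_char :: "'d set \<Rightarrow> 'd set \<Rightarrow> ('d \<Rightarrow> 'd) \<Rightarrow> ('d \<Rightarrow> 'd) \<Rightarrow> int" where
  "euler_char D Pf \<alpha> \<sigma> =
     int (n_vertices D \<sigma>) - int (n_edges D \<alpha>) + int (n_faces_np D Pf \<alpha> \<sigma>)"

definition comb_surface :: "'d set \<Rightarrow> 'd set \<Rightarrow> ('d \<Rightarrow> 'd) \<Rightarrow> ('d \<Rightarrow> 'd) \<Rightarrow> bool" where
  "comb_surface D Pf \<alpha> \<sigma> \<longleftrightarrow> comb_map D \<alpha> \<sigma> \<and> comb_connected D \<alpha> \<sigma> \<and>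
     Pf \<subseteq> D \<and> (\<forall>d\<in>D. face_perm \<alpha> \<sigma> d \<in> Pf \<longleftrightarrow> d \<in> Pf)"

definition bipartite_map :: "'d set \<Rightarrow> ('d \<Rightarrow> 'd) \<Rightarrow> ('d \<Rightarrow> 'd) \<Rightarrow> bool" where
  "bipartite_map D \<alpha> \<sigma> \<longleftrightarrow>
     (\<exists>c :: 'd \<Rightarrow> bool. \<forall>d\<in>D. c (\<sigma> d) = c d \<and> c (\<alpha> d) \<noteq> c d)"

definition system_of_quads :: "'d set \<Rightarrow> 'd set \<Rightarrow> ('d \<Rightarrow> 'd) \<Rightarrow> ('d \<Rightarrow> 'd) \<Rightarrow> bool" where
  "system_of_quads D Pf \<alpha> \<sigma> \<longleftrightarrow>
     comb_surface D Pf \<alpha> \<sigma> \<and> euler_char D Pf \<alpha> \<sigma> < 0 \<and>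
     bipartite_map D \<alpha> \<sigma> \<and>
     (\<forall>d\<in>D - Pf. card (orb (face_perm \<alpha> \<sigma>) d) = 4) \<and>
     (\<forall>d\<in>D. card (orb \<sigma> d) \<ge> 8)"

end

theory Submission
  imports Defs
begin

text \<open>The face permutation flips the colour of a bipartite 2-colouring, so darts of a facial
  walk at positions of equal parity have the same colour, while the two darts of an edge have
  different colours. Hence a repeated edge of a quad with the same orientation would sit at two
  distinct positions of a walk of length 4, impossible since that face orbit has exactly four
  darts; with opposite orientation it would sit at positions of different parity, i.e. at
  consecutive positions of the cyclic walk. But a step of the face permutation from y to
  \<alpha> y means that \<sigma> fixes \<alpha> y, a vertex of degree 1, whereas all degrees are at least 8.\<close>

lemma funpow_period_exists:
  assumes "finite D" and "bij_betw f D D" and "d \<in> D"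
  shows "\<exists>n>0. (f ^^ n) d = d"
proof -
  have iter_in: "(f ^^ k) d \<in> D" for k
    using bij_betw_funpow[OF assms(2)] assms(3) by (auto simp: bij_betw_def)
  have "\<not> inj (\<lambda>k. (f ^^ k) d)"
  proof
    assume "inj (\<lambda>k. (f ^^ k) d)"
    then have "infinite (range (\<lambda>k. (f ^^ k) d))"
      using finite_imageD by blast
    with iter_in \<open>finite D\<close> show False
      by (meson finite_subset image_subsetI)
  qed
  then obtain a b where "a < b" and ab: "(f ^^ a) d = (f ^^ b) d"
    unfolding inj_def by (metis linorder_neqE_nat)
  have "(f ^^ a) ((f ^^ (b - a)) d) = (f ^^ (a + (b - a))) d"
    by (simp add: funpow_add)
  also have "\<dots> = (f ^^ a) d"
    using \<open>a < b\<close> ab by simp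
  finally have "(f ^^ a) ((f ^^ (b - a)) d) = (f ^^ a) d" .
  moreover have "inj_on (f ^^ a) D"
    using bij_betw_funpow[OF assms(2)] by (auto simp: bij_betw_def)
  ultimately have "(f ^^ (b - a)) d = d"
    using iter_in assms(3) by (auto dest: inj_onD)
  with \<open>a < b\<close> show ?thesis by (intro exI[of _ "b - a"]) simp
qed

lemma orb_card_period:
  assumes "finite D" and "bij_betw f D D" and "d \<in> D"
  shows "(f ^^ card (orb f d)) d = d"
    and "inj_on (\<lambda>k. (f ^^ k) d) {..<card (orb f d)}"
proof -
  define p where "p = (LEAST n. 0 < n \<and> (f ^^ n) d = d)"
  have p: "0 < p" "(f ^^ p) d = d"
    unfolding p_def using LeastI_ex[OF funpow_period_exists[OF assms]] by auto
  have inj: "inj_on (\<lambda>k. (f ^^ k) d) {..<p}"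
    using inj_on_funpow_least[where f = f and s = d and n = p] p not_less_Least
    unfolding p_def lessThan_atLeast0 by blast
  have "orb f d = (\<lambda>k. (f ^^ k) d) ` {..<p}"
    unfolding orb_def using p funpow_mod_eq[where f = f and n = p and x = d]
    by (auto intro!: image_eqI[where x = "n mod p" for n])
  then have "card (orb f d) = p"
    using card_image[OF inj] by simp
  with p inj show "(f ^^ card (orb f d)) d = d"
    and "inj_on (\<lambda>k. (f ^^ k) d) {..<card (orb f d)}" by simp_all
qed

lemma orb_fixpoint: "f x = x \<Longrightarrow> orb f x = {x}"
proof -
  assume "f x = x"
  then have "(f ^^ n) x = x" for n by (induction n) simp_all
  then show ?thesis unfolding orb_def by auto
qed

lemma comb_map_face_perm_bij:
  "comb_map D \<alpha> \<sigma> \<Longrightarrow> bij_betw (face_perm \<alpha> \<sigma>) D D"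
  unfolding comb_map_def face_perm_def by (auto intro: bij_betw_trans)

lemma comb_map_face_perm_funpow_in:
  assumes "comb_map D \<alpha> \<sigma>" and "d \<in> D"
  shows "(face_perm \<alpha> \<sigma> ^^ k) d \<in> D"
  using bij_betw_funpow[OF comb_map_face_perm_bij[OF assms(1)]] assms(2)
  by (auto simp: bij_betw_def)

lemma comb_map_alpha_in: "comb_map D \<alpha> \<sigma> \<Longrightarrow> d \<in> D \<Longrightarrow> \<alpha> d \<in> D"
  unfolding comb_map_def bij_betw_def by blast

lemma face_perm_funpow_colour:
  assumes "comb_map D \<alpha> \<sigma>" and "\<forall>x\<in>D. c (\<sigma> x) = c x \<and> c (\<alpha> x) \<noteq> c x"
    and "d \<in> D"
  shows "c ((face_perm \<alpha> \<sigma> ^^ k) d) = (c d \<noteq> odd k)"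
proof (induction k)
  case (Suc k)
  let ?x = "(face_perm \<alpha> \<sigma> ^^ k) d"
  have "?x \<in> D"
    using comb_map_face_perm_funpow_in[OF assms(1,3)] .
  moreover have "\<alpha> ?x \<in> D"
    using comb_map_alpha_in[OF assms(1) \<open>?x \<in> D\<close>] .
  ultimately have "c (face_perm \<alpha> \<sigma> ?x) = (\<not> c ?x)"
    using assms(2) unfolding face_perm_def comp_apply by blast
  with Suc show ?case by simp
qed simp

lemma face_perm_funpow_reversed_parity:
  assumes "comb_map D \<alpha> \<sigma>" and "bipartite_map D \<alpha> \<sigma>" and "d \<in> D"
    and "(face_perm \<alpha> \<sigma> ^^ a) d = \<alpha> ((face_perm \<alpha> \<sigma> ^^ b) d)"
  shows "odd a \<noteq> odd b"
proof -
  obtain c :: "_ \<Rightarrow> bool" where colouring: "\<forall>x\<in>D. c (\<sigma> x) = c x \<and> c (\<alpha> x) \<noteq> c x"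
    using assms(2) unfolding bipartite_map_def by blast
  have "c ((face_perm \<alpha> \<sigma> ^^ a) d) \<noteq> c ((face_perm \<alpha> \<sigma> ^^ b) d)"
    using colouring comb_map_face_perm_funpow_in[OF assms(1,3), of b] assms(4) by simp
  then show ?thesis
    using face_perm_funpow_colour[OF assms(1) colouring assms(3)] by auto
qed

lemma face_perm_neq_alpha:
  assumes "comb_map D \<alpha> \<sigma>" and "\<forall>x\<in>D. card (orb \<sigma> x) \<ge> 2" and "y \<in> D"
  shows "face_perm \<alpha> \<sigma> y \<noteq> \<alpha> y"
proof
  assume "face_perm \<alpha> \<sigma> y = \<alpha> y"
  then have "orb \<sigma> (\<alpha> y) = {\<alpha> y}"
    by (intro orb_fixpoint) (simp add: face_perm_def)
  moreover have "card (orb \<sigma> (\<alpha> y)) \<ge> 2"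
    using assms(2) comb_map_alpha_in[OF assms(1,3)] by blast
  ultimately show False
    by simp
qed

lemma quad_no_reversed_edge:
  assumes "comb_map D \<alpha> \<sigma>" and "\<forall>x\<in>D. card (orb \<sigma> x) \<ge> 2" and "d \<in> D"
    and "(face_perm \<alpha> \<sigma> ^^ 4) d = d"
    and "i < 4" and "j < 4" and "odd i \<noteq> odd j"
  shows "(face_perm \<alpha> \<sigma> ^^ i) d \<noteq> \<alpha> ((face_perm \<alpha> \<sigma> ^^ j) d)"
proof
  let ?\<phi> = "face_perm \<alpha> \<sigma>"
  assume reversed: "(?\<phi> ^^ i) d = \<alpha> ((?\<phi> ^^ j) d)"
  have iter_in: "(?\<phi> ^^ k) d \<in> D" for k
    using comb_map_face_perm_funpow_in assms(1,3) .
  have no_backtrack: "(?\<phi> ^^ (Suc k mod 4)) d \<noteq> \<alpha> ((?\<phi> ^^ k) d)" for k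
  proof -
    have "(?\<phi> ^^ (Suc k mod 4)) d = ?\<phi> ((?\<phi> ^^ k) d)"
      using funpow_mod_eq[where f = ?\<phi> and n = 4 and x = d, OF assms(4)] by simp
    then show ?thesis
      using face_perm_neq_alpha[OF assms(1,2) iter_in] by simp
  qed
  have "(?\<phi> ^^ j) d = \<alpha> ((?\<phi> ^^ i) d)"
    using reversed assms(1) iter_in[of j] unfolding comb_map_def by simp
  moreover have "i = Suc j mod 4 \<or> j = Suc i mod 4"
    using assms(5-7) by presburger
  ultimately show False
    using reversed no_backtrack by blast
qed

theorem lemma30:
  fixes D Pf :: "'d set" and \<alpha> \<sigma> :: "'d \<Rightarrow> 'd" and d :: 'd
  assumes "system_of_quads D Pf \<alpha> \<sigma>"
    and "d \<in> D" and "d \<notin> Pf"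
    and "i < 4" and "j < 4" and "i \<noteq> j"
  shows "(face_perm \<alpha> \<sigma> ^^ i) d \<noteq> (face_perm \<alpha> \<sigma> ^^ j) d
       \<and> (face_perm \<alpha> \<sigma> ^^ i) d \<noteq> \<alpha> ((face_perm \<alpha> \<sigma> ^^ j) d)"
proof -
  let ?\<phi> = "face_perm \<alpha> \<sigma>"
  have map: "comb_map D \<alpha> \<sigma>" and bipartite: "bipartite_map D \<alpha> \<sigma>"
    and quad: "card (orb ?\<phi> d) = 4" and "\<forall>x\<in>D. card (orb \<sigma> x) \<ge> 8"
    using assms(1-3) unfolding system_of_quads_def comb_surface_def by blast+
  then have deg: "\<forall>x\<in>D. card (orb \<sigma> x) \<ge> 2"
    by (simp add: order_trans[of 2 8])
  have fin: "finite D"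
    using map unfolding comb_map_def by blast
  have period: "(?\<phi> ^^ 4) d = d" and inj: "inj_on (\<lambda>k. (?\<phi> ^^ k) d) {..<4}"
    using orb_card_period[OF fin comb_map_face_perm_bij[OF map] assms(2)] quad by simp_all
  have "(?\<phi> ^^ i) d \<noteq> (?\<phi> ^^ j) d"
    using inj assms(4-6) by (auto dest: inj_onD)
  moreover have "(?\<phi> ^^ i) d \<noteq> \<alpha> ((?\<phi> ^^ j) d)"
  proof
    assume reversed: "(?\<phi> ^^ i) d = \<alpha> ((?\<phi> ^^ j) d)"
    then have "odd i \<noteq> odd j"
      using face_perm_funpow_reversed_parity[OF map bipartite assms(2)] by blast
    with reversed quad_no_reversed_edge[OF map deg assms(2) period assms(4,5)] show False
      by blast
  qed
  ultimately show ?thesis by blast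
qed

end
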